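(* The family $\mathcal{FG}$ of functionally generated portfolio maps, with the topology of uniform convergence (supremum metric), is not totally bounded; in fact it is not separable.
   Context: $n\ge2$; $\Delta_n=\{p\in(0,1)^n:\sum p_i=1\}$, $\overline{\Delta}_n$ its closure. A map $\pi:\Delta_n\to\overline{\Delta}_n$ is functionally generated if there is a concave $\Phi:\Delta_n\to(0,\infty)$ with $\sum_i\pi_i(p)\frac{q_i}{p_i}\ge\frac{\Phi(q)}{\Phi(p)}$ for all $p,q\in\Delta_n$. The metric is $\|\pi-\eta\|_\infty=\sup_{p\in\Delta_n}|\pi(p)-\eta(p)|$. *)

theory Defs
  imports "HOL-Analysis.Analysis"
begin

definition open_simplex :: "(real ^ 'n) set" where
  "open_simplex = {p. (\<forall>i. 0 < p $ i \<and> p $ i < 1) \<and> (\<Sum>i\<in>UNIV. p $ i) = 1}"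

text \<open>Functionally generated portfolio maps pi : open_simplex -> closure open_simplex.
  Values outside the open_simplex are irrelevant (the metric only looks at the open_simplex).\<close>
definition functionally_generated :: "(real ^ 'n \<Rightarrow> real ^ 'n) \<Rightarrow> bool" where
  "functionally_generated \<pi> \<longleftrightarrow>
     (\<forall>p\<in>open_simplex. \<pi> p \<in> closure open_simplex) \<and>
     (\<exists>\<Phi> :: real ^ 'n \<Rightarrow> real.
        concave_on open_simplex \<Phi> \<and> (\<forall>p\<in>open_simplex. 0 < \<Phi> p) \<and>
        (\<forall>p\<in>open_simplex. \<forall>q\<in>open_simplex.
           (\<Sum>i\<in>UNIV. \<pi> p $ i * (q $ i / p $ i)) \<ge> \<Phi> q / \<Phi> p))"

definition FG :: "(real ^ 'n \<Rightarrow> real ^ 'n) set" where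
  "FG = {\<pi>. functionally_generated \<pi>}"

definition sup_dist :: "(real ^ 'n \<Rightarrow> real ^ 'n) \<Rightarrow> (real ^ 'n \<Rightarrow> real ^ 'n) \<Rightarrow> real" where
  "sup_dist \<pi> \<eta> = (SUP p\<in>open_simplex. norm (\<pi> p - \<eta> p))"

end

theory Submission
  imports Defs
begin

text \<open>For a threshold \<open>t > 0\<close> and an asset \<open>i\<close>, the portfolio that holds the weights
  \<open>2 p\<^sub>i : p\<^sub>j\<close> while \<open>p\<^sub>i < t\<close> and the market portfolio otherwise is functionally generated
  by the concave function \<open>min 1 ((1 + p\<^sub>i) / (1 + t))\<close>. For \<open>1/4 < s < t < 1/2\<close> the
  portfolios with thresholds \<open>s\<close> and \<open>t\<close> differ by at least \<open>1/12\<close> in coordinate \<open>i\<close> at any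
  market weight with \<open>p\<^sub>i = s\<close>. This uncountable \<open>1/12\<close>-separated family rules out a
  countable dense subset, and hence also finite \<open>\<epsilon>\<close>-nets for every \<open>\<epsilon>\<close>.\<close>

lemma open_simplex_eq_box_Int_hyperplane:
  "(open_simplex :: (real^'n) set) = box 0 1 \<inter> {x. 1 \<bullet> x = 1}"
  by (auto simp: open_simplex_def mem_box_cart inner_vec_def)

lemma convex_open_simplex: "convex (open_simplex :: (real^'n) set)"
  unfolding open_simplex_eq_box_Int_hyperplane
  by (intro convex_Int convex_box convex_hyperplane)

lemma bounded_open_simplex: "bounded (open_simplex :: (real^'n) set)"
  unfolding open_simplex_eq_box_Int_hyperplane by (intro bounded_Int) auto

lemma in_open_simplexD:
  assumes "p \<in> open_simplex"
  shows "0 < p $ j" "p $ j < 1" "(\<Sum>j\<in>UNIV. p $ j) = 1"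
  using assms by (auto simp: open_simplex_def)

lemma open_simplex_point_with_coordinate:
  assumes n: "CARD('n::finite) \<ge> 2" and s: "0 < s" "s < 1"
  shows "\<exists>p::real^'n. p \<in> open_simplex \<and> p$i = s"
proof -
  define c where "c = (1 - s) / (real CARD('n) - 1)"
  have n1: "real CARD('n) - 1 \<ge> 1"
    using n by simp
  have c: "0 < c" "c < 1"
    using s n1 by (auto simp: c_def divide_less_eq)
  define p :: "real^'n" where "p = (\<chi> j. if j = i then s else c)"
  have "(\<Sum>j\<in>UNIV. p$j) = s + (\<Sum>j\<in>UNIV-{i}. c)"
    by (simp add: sum.remove[of UNIV i] p_def)
  also have "\<dots> = 1"
    using n1 by (simp add: card_Diff_singleton of_nat_diff c_def)
  finally have "p \<in> open_simplex"
    using s c by (simp add: open_simplex_def p_def)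
  then show ?thesis
    by (auto simp: p_def)
qed

lemma bdd_above_norm_diff_FG:
  assumes "\<pi> \<in> FG" "\<eta> \<in> FG"
  shows "bdd_above ((\<lambda>p. norm (\<pi> p - \<eta> p)) ` (open_simplex :: (real^'n) set))"
proof -
  obtain B where B: "\<And>x. x \<in> closure (open_simplex :: (real^'n) set) \<Longrightarrow> norm x \<le> B"
    using bounded_closure[OF bounded_open_simplex] by (auto simp: bounded_iff)
  have "norm (\<pi> p - \<eta> p) \<le> 2 * B" if "p \<in> open_simplex" for p
  proof -
    have "\<pi> p \<in> closure open_simplex" "\<eta> p \<in> closure open_simplex"
      using assms that by (simp_all add: FG_def functionally_generated_def)
    then show ?thesis
      using B[of "\<pi> p"] B[of "\<eta> p"] norm_triangle_ineq4[of "\<pi> p" "\<eta> p"] by linarith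
  qed
  then show ?thesis by (rule bdd_aboveI2)
qed

lemma norm_le_sup_dist:
  assumes "\<pi> \<in> FG" "\<eta> \<in> FG" "p \<in> open_simplex"
  shows "norm (\<pi> p - \<eta> p) \<le> sup_dist \<pi> \<eta>"
  unfolding sup_dist_def using bdd_above_norm_diff_FG[OF assms(1,2)] assms(3)
  by (rule cSUP_upper2) simp

lemma sup_dist_commute: "sup_dist \<pi> \<eta> = sup_dist \<eta> \<pi>"
  unfolding sup_dist_def by (simp add: norm_minus_commute)

lemma sup_dist_triangle:
  fixes \<pi> \<sigma> \<eta> :: "real^'n \<Rightarrow> real^'n"
  assumes "(open_simplex :: (real^'n) set) \<noteq> {}" "\<pi> \<in> FG" "\<sigma> \<in> FG" "\<eta> \<in> FG"
  shows "sup_dist \<pi> \<sigma> \<le> sup_dist \<pi> \<eta> + sup_dist \<sigma> \<eta>"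
  unfolding sup_dist_def[of \<pi> \<sigma>]
proof (rule cSUP_least[OF assms(1)])
  fix p :: "real^'n" assume p: "p \<in> open_simplex"
  have "norm (\<pi> p - \<sigma> p) \<le> norm (\<pi> p - \<eta> p) + norm (\<sigma> p - \<eta> p)"
    using norm_triangle_ineq4[of "\<pi> p - \<eta> p" "\<sigma> p - \<eta> p"] by simp
  also have "\<dots> \<le> sup_dist \<pi> \<eta> + sup_dist \<sigma> \<eta>"
    using norm_le_sup_dist[OF assms(2,4) p] norm_le_sup_dist[OF assms(3,4) p] by simp
  finally show "norm (\<pi> p - \<sigma> p) \<le> sup_dist \<pi> \<eta> + sup_dist \<sigma> \<eta>" .
qed

lemma countable_dense_if_finite_nets:
  fixes d :: "'a \<Rightarrow> 'a \<Rightarrow> real"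
  assumes "\<forall>e>0. \<exists>D. finite D \<and> D \<subseteq> S \<and> (\<forall>x\<in>S. \<exists>y\<in>D. d x y < e)"
  shows "\<exists>D. countable D \<and> D \<subseteq> S \<and> (\<forall>x\<in>S. \<forall>e>0. \<exists>y\<in>D. d x y < e)"
proof -
  have "\<forall>k::nat. \<exists>D. finite D \<and> D \<subseteq> S \<and> (\<forall>x\<in>S. \<exists>y\<in>D. d x y < inverse (Suc k))"
    using assms by simp
  then obtain N where N: "\<And>k. finite (N k) \<and> N k \<subseteq> S \<and> (\<forall>x\<in>S. \<exists>y\<in>N k. d x y < inverse (Suc k))"
    by metis
  show ?thesis
  proof (intro exI[of _ "\<Union>k. N k"] conjI ballI allI impI)
    show "countable (\<Union>k. N k)"
      using N by (intro countable_UN) (auto intro: countable_finite)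
    show "(\<Union>k. N k) \<subseteq> S"
      using N by blast
    fix x and e :: real assume "x \<in> S" "e > 0"
    obtain k where k: "inverse (Suc k) < e"
      using reals_Archimedean[OF \<open>e > 0\<close>] by blast
    obtain y where y: "y \<in> N k" "d x y < inverse (Suc k)"
      using N \<open>x \<in> S\<close> by blast
    then have "d x y < e" using k by linarith
    with y(1) show "\<exists>y\<in>(\<Union>k. N k). d x y < e" by blast
  qed
qed

lemma no_countable_dense_if_uncountable_separated:
  fixes d :: "'a \<Rightarrow> 'a \<Rightarrow> real" and f :: "'b \<Rightarrow> 'a"
  assumes triangle: "\<And>x y z. x \<in> S \<Longrightarrow> y \<in> S \<Longrightarrow> z \<in> S \<Longrightarrow> d x y \<le> d x z + d y z"
    and "uncountable A" "f ` A \<subseteq> S" "e > 0"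
    and separated: "\<And>a b. a \<in> A \<Longrightarrow> b \<in> A \<Longrightarrow> a \<noteq> b \<Longrightarrow> e \<le> d (f a) (f b)"
  shows "\<not> (\<exists>D. countable D \<and> D \<subseteq> S \<and> (\<forall>x\<in>S. \<forall>e>0. \<exists>y\<in>D. d x y < e))"
proof
  assume "\<exists>D. countable D \<and> D \<subseteq> S \<and> (\<forall>x\<in>S. \<forall>e>0. \<exists>y\<in>D. d x y < e)"
  then obtain D where D: "countable D" "D \<subseteq> S" "\<forall>x\<in>S. \<forall>e>0. \<exists>y\<in>D. d x y < e"
    by blast
  have "\<exists>y\<in>D. d (f a) y < e / 2" if "a \<in> A" for a
  proof -
    have "f a \<in> S" "e / 2 > 0" using \<open>f ` A \<subseteq> S\<close> that \<open>e > 0\<close> by auto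
    then show ?thesis using D(3) by blast
  qed
  then obtain h where h: "\<And>a. a \<in> A \<Longrightarrow> h a \<in> D \<and> d (f a) (h a) < e / 2"
    by metis
  have "inj_on h A"
  proof (rule inj_onI, rule ccontr)
    fix a b assume ab: "a \<in> A" "b \<in> A" "h a = h b" "a \<noteq> b"
    then have "d (f a) (f b) \<le> d (f a) (h a) + d (f b) (h a)"
      using triangle h D(2) \<open>f ` A \<subseteq> S\<close> by blast
    also have "\<dots> < e"
      using h[OF ab(1)] h[OF ab(2)] ab(3) by simp
    finally show False using separated ab by fastforce
  qed
  moreover have "countable (h ` A)"
    using h D(1) by (auto intro: countable_subset)
  ultimately show False
    using \<open>uncountable A\<close> countable_image_inj_on by blast
qed

lemma concave_on_min:
  assumes "concave_on S f" "concave_on S g"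
  shows "concave_on S (\<lambda>x. min (f x) (g x))"
  unfolding concave_on_iff
proof (intro conjI ballI allI impI)
  show "convex S" using assms(1) by (rule concave_on_imp_convex)
  fix x y and u v :: real
  assume xy: "x \<in> S" "y \<in> S" and uv: "0 \<le> u" "0 \<le> v" "u + v = 1"
  let ?m = "u * min (f x) (g x) + v * min (f y) (g y)" and ?z = "u *\<^sub>R x + v *\<^sub>R y"
  have "?m \<le> u * f x + v * f y" "?m \<le> u * g x + v * g y"
    using uv by (intro add_mono mult_left_mono; simp)+
  moreover have "u * f x + v * f y \<le> f ?z" "u * g x + v * g y \<le> g ?z"
    using assms xy uv unfolding concave_on_iff by blast+
  ultimately show "?m \<le> min (f ?z) (g ?z)"
    by simp
qed

lemma concave_on_component:
  fixes S :: "(real^'n) set"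
  assumes "convex S"
  shows "concave_on S (\<lambda>x. x $ i)"
  using assms by (simp add: concave_on_iff)

definition threshold_portfolio :: "'n::finite \<Rightarrow> real \<Rightarrow> real^'n \<Rightarrow> real^'n" where
  "threshold_portfolio i t p =
     (if p$i < t then (\<chi> j. (if j = i then 2 else 1) * p$j / (1 + p$i)) else p)"

definition threshold_generator :: "'n::finite \<Rightarrow> real \<Rightarrow> real^'n \<Rightarrow> real" where
  "threshold_generator i t p = min 1 ((1 + p$i) / (1 + t))"

lemma sum_double_coordinate:
  fixes q :: "real^'n"
  shows "(\<Sum>j\<in>UNIV. (if j = i then 2 else 1) * q$j) = (\<Sum>j\<in>UNIV. q$j) + q$i"
proof -
  have "(\<Sum>j\<in>UNIV. (if j = i then 2 else 1) * q$j) = (\<Sum>j\<in>UNIV. q$j + (if j = i then q$j else 0))"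
    by (intro sum.cong) auto
  also have "\<dots> = (\<Sum>j\<in>UNIV. q$j) + q$i"
    by (simp add: sum.distrib)
  finally show ?thesis .
qed

lemma threshold_portfolio_in_open_simplex:
  assumes p: "p \<in> open_simplex"
  shows "threshold_portfolio i t p \<in> open_simplex"
proof (cases "p$i < t")
  case True
  have pos: "0 < p$j" "p$j < 1" for j
    using p by (auto dest: in_open_simplexD)
  have "0 < (if j = i then 2 else 1) * p$j / (1 + p$i) \<and> (if j = i then 2 else 1) * p$j / (1 + p$i) < 1" for j
  proof -
    have "(if j = i then 2 else 1) * p$j < 1 + p$i"
      using pos[of j] pos[of i] by (cases "j = i") auto
    then show ?thesis using pos[of i] pos[of j] by (simp add: divide_less_eq)
  qed
  moreover have "(\<Sum>j\<in>UNIV. (if j = i then 2 else 1) * p$j / (1 + p$i)) = 1"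
    using pos[of i] in_open_simplexD(3)[OF p]
    by (simp add: sum_divide_distrib[symmetric] sum_double_coordinate)
  ultimately show ?thesis
    using True by (simp add: threshold_portfolio_def open_simplex_def)
qed (use p in \<open>simp add: threshold_portfolio_def\<close>)

lemma concave_on_threshold_generator:
  assumes "0 < t"
  shows "concave_on open_simplex (threshold_generator i t)"
  unfolding threshold_generator_def using assms
  by (intro concave_on_min concave_on_cdiv concave_on_add concave_on_component
      concave_on_const[THEN iffD2] convex_open_simplex) auto

lemma threshold_portfolio_relative_value:
  assumes p: "p \<in> open_simplex" and q: "q \<in> open_simplex"
  shows "(\<Sum>j\<in>UNIV. threshold_portfolio i t p $ j * (q $ j / p $ j))
           = (if p$i < t then (1 + q$i) / (1 + p$i) else 1)"
proof (cases "p$i < t")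
  case True
  have "p$j \<noteq> 0" "1 + p$i \<noteq> 0" for j
    using in_open_simplexD(1)[OF p, of j] in_open_simplexD(1)[OF p, of i] by auto
  then have "(\<Sum>j\<in>UNIV. threshold_portfolio i t p $ j * (q $ j / p $ j))
             = (\<Sum>j\<in>UNIV. (if j = i then 2 else 1) * q$j) / (1 + p$i)"
    using True by (simp add: threshold_portfolio_def sum_divide_distrib field_simps)
  then show ?thesis
    using True in_open_simplexD(3)[OF q] by (simp add: sum_double_coordinate)
next
  case False
  have "p$j \<noteq> 0" for j
    using in_open_simplexD(1)[OF p, of j] by auto
  then show ?thesis
    using False in_open_simplexD(3)[OF q] by (simp add: threshold_portfolio_def)
qed

lemma threshold_portfolio_in_FG:
  fixes i :: "'n::finite"
  assumes t: "0 < t"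
  shows "threshold_portfolio i t \<in> FG"
  unfolding FG_def functionally_generated_def mem_Collect_eq
proof (intro conjI ballI exI[of _ "threshold_generator i t"])
  show "concave_on open_simplex (threshold_generator i t)"
    using t by (rule concave_on_threshold_generator)
  fix p :: "real^'n" assume p: "p \<in> open_simplex"
  then show "threshold_portfolio i t p \<in> closure open_simplex"
    using threshold_portfolio_in_open_simplex closure_subset by blast
  show "0 < threshold_generator i t p"
    using in_open_simplexD(1)[OF p, of i] t by (simp add: threshold_generator_def)
  fix q :: "real^'n" assume q: "q \<in> open_simplex"
  have gen_q: "threshold_generator i t q \<le> 1" "threshold_generator i t q \<le> (1 + q$i) / (1 + t)"
    by (simp_all add: threshold_generator_def)
  have "threshold_generator i t q / threshold_generator i t p \<le> (if p$i < t then (1 + q$i) / (1 + p$i) else 1)"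
  proof (cases "p$i < t")
    case True
    have "0 < p$i" using p by (rule in_open_simplexD)
    with True t have gen_p: "threshold_generator i t p = (1 + p$i) / (1 + t)"
      by (simp add: threshold_generator_def)
    have "threshold_generator i t q / threshold_generator i t p \<le> ((1 + q$i) / (1 + t)) / ((1 + p$i) / (1 + t))"
      unfolding gen_p using gen_q(2) \<open>0 < p$i\<close> t by (intro divide_right_mono) auto
    also have "\<dots> = (1 + q$i) / (1 + p$i)"
      using t by simp
    finally show ?thesis using True by simp
  next
    case False
    then have "threshold_generator i t p = 1"
      using t by (simp add: threshold_generator_def)
    then show ?thesis using False gen_q(1) by simp
  qed
  then show "threshold_generator i t q / threshold_generator i t p
      \<le> (\<Sum>j\<in>UNIV. threshold_portfolio i t p $ j * (q $ j / p $ j))"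
    unfolding threshold_portfolio_relative_value[OF p q] .
qed

lemma threshold_portfolios_far_apart:
  assumes n: "CARD('n::finite) \<ge> 2" and st: "1/4 \<le> s" "s < t" "t \<le> 1/2"
  shows "\<exists>p::real^'n. p \<in> open_simplex \<and> 1/12 \<le> norm (threshold_portfolio i s p - threshold_portfolio i t p)"
proof -
  obtain p :: "real^'n" where p: "p \<in> open_simplex" "p$i = s"
    using open_simplex_point_with_coordinate[OF n, of s i] st by auto
  let ?d = "threshold_portfolio i s p - threshold_portfolio i t p"
  have "?d $ i = - (s * (1 - s) / (1 + s))"
    using p st by (simp add: threshold_portfolio_def field_simps)
  moreover have "1/12 \<le> s * (1 - s) / (1 + s)"
  proof -
    have "1/4 * (1/2) \<le> s * (1 - s)"
      using st by (intro mult_mono) auto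
    then show ?thesis
      using st by (simp add: field_simps)
  qed
  ultimately have "1/12 \<le> \<bar>?d $ i\<bar>"
    by (metis abs_ge_self abs_minus_cancel order_trans)
  then show ?thesis
    using p(1) component_le_norm_cart[of ?d i] by (meson order_trans)
qed

lemma sup_dist_threshold_portfolios_ge:
  assumes n: "CARD('n::finite) \<ge> 2" and st: "s \<in> {1/4..1/2}" "t \<in> {1/4..1/2}" "s \<noteq> t"
  shows "1/12 \<le> sup_dist (threshold_portfolio i s :: real^'n \<Rightarrow> real^'n) (threshold_portfolio i t)"
proof -
  have ordered: "1/12 \<le> sup_dist (threshold_portfolio i a :: real^'n \<Rightarrow> real^'n) (threshold_portfolio i b)"
    if ab: "1/4 \<le> a" "a < b" "b \<le> 1/2" for a b
  proof -
    obtain p :: "real^'n" where "p \<in> open_simplex"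
        "1/12 \<le> norm (threshold_portfolio i a p - threshold_portfolio i b p)"
      using threshold_portfolios_far_apart[OF n ab] by blast
    moreover have "threshold_portfolio i a \<in> FG" "threshold_portfolio i b \<in> FG"
      using ab by (auto intro: threshold_portfolio_in_FG)
    ultimately show ?thesis
      by (meson norm_le_sup_dist order_trans)
  qed
  consider "s < t" | "t < s"
    using \<open>s \<noteq> t\<close> by linarith
  then show ?thesis
  proof cases
    case 1
    then show ?thesis using st by (intro ordered) auto
  next
    case 2
    then show ?thesis using st by (subst sup_dist_commute) (intro ordered; auto)
  qed
qed

theorem lemma4p2:
  assumes "CARD('n) \<ge> 2"
  shows "\<not> (\<forall>e>0. \<exists>D. finite D \<and> D \<subseteq> (FG :: (real ^ 'n \<Rightarrow> real ^ 'n) set) \<and>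
                  (\<forall>\<pi>\<in>FG. \<exists>\<eta>\<in>D. sup_dist \<pi> \<eta> < e))
         \<and> \<not> (\<exists>D. countable D \<and> D \<subseteq> (FG :: (real ^ 'n \<Rightarrow> real ^ 'n) set) \<and>
                  (\<forall>\<pi>\<in>FG. \<forall>e>0. \<exists>\<eta>\<in>D. sup_dist \<pi> \<eta> < e))"
proof -
  obtain i :: 'n where True by simp
  let ?A = "{1/4<..<1/2 :: real}"
  have "(open_simplex :: (real^'n) set) \<noteq> {}"
    using open_simplex_point_with_coordinate[OF assms, of "1/2" i] by auto
  note triangle = sup_dist_triangle[OF this]
  have in_FG: "threshold_portfolio i ` ?A \<subseteq> FG"
    by (auto intro: threshold_portfolio_in_FG)
  have separated: "1/12 \<le> sup_dist (threshold_portfolio i s) (threshold_portfolio i t)"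
    if "s \<in> ?A" "t \<in> ?A" "s \<noteq> t" for s t
    using sup_dist_threshold_portfolios_ge[OF assms] that by simp
  have not_separable: "\<not> (\<exists>D. countable D \<and> D \<subseteq> (FG :: (real ^ 'n \<Rightarrow> real ^ 'n) set) \<and>
                  (\<forall>\<pi>\<in>FG. \<forall>e>0. \<exists>\<eta>\<in>D. sup_dist \<pi> \<eta> < e))"
    using no_countable_dense_if_uncountable_separated[where d = sup_dist and f = "threshold_portfolio i",
        OF triangle _ in_FG _ separated]
    by (simp add: uncountable_open_interval)
  show ?thesis
  proof (intro conjI notI)
    assume "\<forall>e>0. \<exists>D. finite D \<and> D \<subseteq> (FG :: (real ^ 'n \<Rightarrow> real ^ 'n) set) \<and>
                  (\<forall>\<pi>\<in>FG. \<exists>\<eta>\<in>D. sup_dist \<pi> \<eta> < e)"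
    with not_separable countable_dense_if_finite_nets show False by blast
  qed (use not_separable in blast)
qed

end
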